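(* Let $F : \mathbb{R}^n \to \mathbb{R}^n$ be real analytic and suppose it extends to an entire map $F : \mathbb{C}^n \to \mathbb{C}^n$. If the Koopman operator $\mathcal{K}_F g = g\circ F$ is bounded (with domain all of the space) on the native space of the Gaussian RBF kernel over $\mathbb{R}^n$, then the Koopman operator $\mathcal{K}_F g = g \circ F$ induced by the extended map is bounded on $H_G(\mathbb{C}^n)$.
   Context: The Gaussian RBF kernel on $\mathbb{R}^n$ is $K(x,y) = \exp(-\|x-y\|_2^2/2)$. Its native space is the real RKHS on $\mathbb{R}^n$ with this kernel. $H_G(\mathbb{C}^n)$ denotes the RKHS of entire functions on $\mathbb{C}^n$ with reproducing kernel $K_G(z,w) = \exp\!\left(-\tfrac12 \sum_{j=1}^n (z_j - \overline{w_j})^2\right)$. Equivalently, $H_G(\mathbb{C}^n) = \{ g(z) e^{-\sum_j z_j^2/2} : g \in F^2(\mathbb{C}^n)\}$, where $F^2(\mathbb{C}^n)$ is the Fock space with kernel $e^{\sum_j \overline{w_j} z_j}$. *)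

theory Defs
  imports "HOL-Analysis.Analysis"
begin

text \<open>For a positive definite kernel K on a set X, a function f lies in the RKHS H_K iff
  there is C with |sum_i c_i f(x_i)|^2 <= C * || sum_i conj(c_i) K(.,x_i) ||^2 for all finite
  point families and coefficients, and ||f||_{H_K}^2 is the least such C
  (Aronszajn; Saitoh).  Here || sum_i conj(c_i) K(.,x_i) ||^2 = sum_{i,j} conj(c_i) c_j K(x_j,x_i).\<close>

definition rkhs_bound_real :: "('a \<Rightarrow> 'a \<Rightarrow> real) \<Rightarrow> ('a \<Rightarrow> real) \<Rightarrow> real \<Rightarrow> bool" where
  "rkhs_bound_real K f C \<longleftrightarrow> C \<ge> 0 \<and>
     (\<forall>(m::nat) (x::nat \<Rightarrow> 'a) (c::nat \<Rightarrow> real).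
        (\<Sum>i<m. c i * f (x i))\<^sup>2 \<le> C * (\<Sum>i<m. \<Sum>j<m. c i * c j * K (x j) (x i)))"

definition rkhs_real :: "('a \<Rightarrow> 'a \<Rightarrow> real) \<Rightarrow> ('a \<Rightarrow> real) set" where
  "rkhs_real K = {f. \<exists>C. rkhs_bound_real K f C}"

definition rkhs_norm_real :: "('a \<Rightarrow> 'a \<Rightarrow> real) \<Rightarrow> ('a \<Rightarrow> real) \<Rightarrow> real" where
  "rkhs_norm_real K f = sqrt (Inf {C. rkhs_bound_real K f C})"

definition rkhs_bound_complex :: "('a \<Rightarrow> 'a \<Rightarrow> complex) \<Rightarrow> ('a \<Rightarrow> complex) \<Rightarrow> real \<Rightarrow> bool" where
  "rkhs_bound_complex K f C \<longleftrightarrow> C \<ge> 0 \<and>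
     (\<forall>(m::nat) (x::nat \<Rightarrow> 'a) (c::nat \<Rightarrow> complex).
        (cmod (\<Sum>i<m. c i * f (x i)))\<^sup>2 \<le>
          C * Re (\<Sum>i<m. \<Sum>j<m. cnj (c i) * c j * K (x j) (x i)))"

definition rkhs_complex :: "('a \<Rightarrow> 'a \<Rightarrow> complex) \<Rightarrow> ('a \<Rightarrow> complex) set" where
  "rkhs_complex K = {f. \<exists>C. rkhs_bound_complex K f C}"

definition rkhs_norm_complex :: "('a \<Rightarrow> 'a \<Rightarrow> complex) \<Rightarrow> ('a \<Rightarrow> complex) \<Rightarrow> real" where
  "rkhs_norm_complex K f = sqrt (Inf {C. rkhs_bound_complex K f C})"

definition gauss_kernel :: "real^'n \<Rightarrow> real^'n \<Rightarrow> real" where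
  "gauss_kernel x y = exp (- (norm (x - y))\<^sup>2 / 2)"

definition gauss_kernel_C :: "complex^'n \<Rightarrow> complex^'n \<Rightarrow> complex" where
  "gauss_kernel_C z w = exp (- (1/2) * (\<Sum>j\<in>UNIV. (z $ j - cnj (w $ j))\<^sup>2))"

abbreviation "native_gauss \<equiv> rkhs_real gauss_kernel"
abbreviation "H_G \<equiv> rkhs_complex gauss_kernel_C"

definition koopman_bounded_real :: "('a \<Rightarrow> 'a \<Rightarrow> real) \<Rightarrow> ('a \<Rightarrow> 'a) \<Rightarrow> bool" where
  "koopman_bounded_real K F \<longleftrightarrow>
     (\<exists>B. \<forall>g \<in> rkhs_real K. g \<circ> F \<in> rkhs_real K \<and>
            rkhs_norm_real K (g \<circ> F) \<le> B * rkhs_norm_real K g)"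

definition koopman_bounded_complex :: "('a \<Rightarrow> 'a \<Rightarrow> complex) \<Rightarrow> ('a \<Rightarrow> 'a) \<Rightarrow> bool" where
  "koopman_bounded_complex K F \<longleftrightarrow>
     (\<exists>B. \<forall>g \<in> rkhs_complex K. g \<circ> F \<in> rkhs_complex K \<and>
            rkhs_norm_complex K (g \<circ> F) \<le> B * rkhs_norm_complex K g)"

definition real_analytic_vec :: "(real^'n \<Rightarrow> real^'m) \<Rightarrow> bool" where
  "real_analytic_vec F \<longleftrightarrow>
     (\<forall>x0. \<exists>r>0. \<exists>a :: ('n \<Rightarrow> nat) \<Rightarrow> real^'m.
        \<forall>y \<in> ball x0 r.
          ((\<lambda>\<alpha>. (\<Prod>i\<in>UNIV. (y $ i - x0 $ i) ^ \<alpha> i) *\<^sub>R a \<alpha>) has_sum F y) UNIV)"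

definition entire_vec :: "(complex^'n \<Rightarrow> complex^'m) \<Rightarrow> bool" where
  "entire_vec F \<longleftrightarrow>
     (\<forall>z. \<exists>D. (F has_derivative D) (at z) \<and> (\<forall>(c::complex) v. D (c *s v) = c *s D v))"

definition cvec :: "real^'n \<Rightarrow> complex^'n" where
  "cvec x = (\<chi> i. complex_of_real (x $ i))"

end

theory Submission
  imports Defs "HOL-Complex_Analysis.Cauchy_Integral_Formula"
begin

text \<open>
  A Koopman operator on a reproducing kernel Hilbert space is bounded as soon as its Gram forms
  Q(c, z) = Re (sum i j. cnj (c i) * c j * K (z j) (z i)) are dominated: Q(c, F o z) <= B^2 Q(c, z)
  for all finite families. On the real side this domination follows from the hypothesis by testing
  it against kernel sections (Cauchy-Schwarz); it extends to complex coefficients at real points,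
  where the complex Gaussian kernel is real.

  To reach complex points z k = x k + i y k, expand the complex Gaussian kernel in the features
  f_iota z = exp (- z . z / 2) * z_iota, which writes Q(c, z) as
  sum N. 1/N! * sum over |iota| = N of |sum k. c k * f_iota (z k)|^2. Along the line
  s |-> x k + s y k every feature of Fc is entire in s. Its value at s = i is the limit of its
  Taylor polynomials, and each Taylor coefficient is the limit of finite difference quotients at the
  real points 0, h, ..., p h. So the Gram form at complex points is a double limit of Gram forms at
  real points; Cauchy estimates bound the errors uniformly in iota, and the domination survives both
  limits.
\<close>

section \<open>Gram forms and reproducing kernel bounds\<close>

definition gram_form :: "('a \<Rightarrow> 'a \<Rightarrow> real) \<Rightarrow> (nat \<Rightarrow> real) \<Rightarrow> (nat \<Rightarrow> 'a) \<Rightarrow> nat \<Rightarrow> real" where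
  "gram_form K c x m = (\<Sum>i<m. \<Sum>j<m. c i * c j * K (x j) (x i))"

definition gram_form_C ::
  "('a \<Rightarrow> 'a \<Rightarrow> complex) \<Rightarrow> (nat \<Rightarrow> complex) \<Rightarrow> (nat \<Rightarrow> 'a) \<Rightarrow> nat \<Rightarrow> real" where
  "gram_form_C K c z m = Re (\<Sum>i<m. \<Sum>j<m. cnj (c i) * c j * K (z j) (z i))"

lemma square_le_of_quadratic_nonneg:
  fixes a b x :: real
  assumes "\<And>t. 0 \<le> a + 2 * t * x + t\<^sup>2 * b" and "b \<ge> 0"
  shows "x\<^sup>2 \<le> a * b"
proof (cases "b = 0")
  case True
  have "x = 0"
  proof (rule ccontr)
    assume "x \<noteq> 0"
    have "0 \<le> a + 2 * (- (\<bar>a\<bar> + 1) / (2 * x)) * x + (- (\<bar>a\<bar> + 1) / (2 * x))\<^sup>2 * b"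
      by (rule assms(1))
    also have "\<dots> = a - (\<bar>a\<bar> + 1)"
      using True \<open>x \<noteq> 0\<close> by (simp add: field_simps)
    finally show False by linarith
  qed
  then show ?thesis using True by simp
next
  case False
  then have "b > 0" using assms(2) by simp
  have "0 \<le> a + 2 * (- x / b) * x + (- x / b)\<^sup>2 * b"
    by (rule assms(1))
  also have "\<dots> = a - x\<^sup>2 / b"
    using \<open>b > 0\<close> by (simp add: field_simps power2_eq_square)
  finally show ?thesis
    using \<open>b > 0\<close> by (simp add: field_simps)
qed

lemma sum_lessThan_add: "(\<Sum>i<m + (n::nat). f i :: 'a::comm_monoid_add) = (\<Sum>i<m. f i) + (\<Sum>i<n. f (m + i))"
  by (induction n arbitrary: f) (simp_all add: add.assoc)

lemma sum_lessThan_mult_div_mod: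
  fixes f :: "nat \<Rightarrow> nat \<Rightarrow> 'a::comm_monoid_add"
  shows "(\<Sum>i<q * m. f (i div m) (i mod m)) = (\<Sum>a<q. \<Sum>k<m. f a k)"
proof -
  have "(\<Sum>i\<in>{a * m..<a * m + m}. f (i div m) (i mod m)) = (\<Sum>k<m. f a k)" for a
    using sum.shift_bounds_nat_ivl[of "\<lambda>i. f (i div m) (i mod m)" 0 "a * m" m]
    by (cases "m = 0") (auto simp: atLeast0LessThan add.commute intro!: sum.cong)
  then show ?thesis
    by (simp flip: sum.nat_group)
qed

lemma gram_form_append:
  assumes sym: "\<And>x y. K x y = K y x"
  shows "gram_form K (\<lambda>i. if i < m then c i else t * b (i - m))
      (\<lambda>i. if i < m then y i else u (i - m)) (m + m') = gram_form K c y m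
    + 2 * t * (\<Sum>i<m. c i * (\<Sum>j<m'. b j * K (y i) (u j))) + t\<^sup>2 * gram_form K b u m'"
proof -
  define X where "X = (\<Sum>i<m. c i * (\<Sum>j<m'. b j * K (y i) (u j)))"
  have "(\<Sum>i<m. \<Sum>j<m'. c i * (t * b j) * K (u j) (y i)) = t * X"
    by (simp add: X_def sum_distrib_left mult_ac sym)
  moreover have "(\<Sum>i<m'. \<Sum>j<m. t * b i * c j * K (y j) (u i)) = t * X"
    by (subst sum.swap) (simp add: X_def sum_distrib_left mult_ac sym)
  moreover have "(\<Sum>i<m'. \<Sum>j<m'. t * b i * (t * b j) * K (u j) (u i)) = t\<^sup>2 * gram_form K b u m'"
    by (simp add: gram_form_def sum_distrib_left power2_eq_square mult_ac)
  ultimately show ?thesis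
    unfolding X_def[symmetric] by (simp add: gram_form_def sum_lessThan_add sum.distrib)
qed

lemma kernel_cauchy_schwarz:
  assumes sym: "\<And>x y. K x y = K y x" and psd: "\<And>c x m. gram_form K c x m \<ge> 0"
  shows "(\<Sum>i<m. c i * (\<Sum>j<m'. b j * K (y i) (u j)))\<^sup>2 \<le> gram_form K c y m * gram_form K b u m'"
proof (rule square_le_of_quadratic_nonneg[OF _ psd])
  fix t
  show "0 \<le> gram_form K c y m + 2 * t * (\<Sum>i<m. c i * (\<Sum>j<m'. b j * K (y i) (u j)))
      + t\<^sup>2 * gram_form K b u m'"
    by (subst gram_form_append[OF sym, symmetric]) (rule psd)
qed

lemma rkhs_bound_real_gram_form:
  "rkhs_bound_real K f C \<longleftrightarrow> C \<ge> 0 \<and> (\<forall>m x c. (\<Sum>i<m. c i * f (x i))\<^sup>2 \<le> C * gram_form K c x m)"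
  by (simp add: rkhs_bound_real_def gram_form_def)

lemma bdd_below_rkhs_bound_real: "bdd_below {C. rkhs_bound_real K f C}"
  unfolding rkhs_bound_real_def by (rule bdd_belowI[of _ 0]) auto

lemma Inf_rkhs_bound_real_nonneg:
  assumes "f \<in> rkhs_real K"
  shows "Inf {C. rkhs_bound_real K f C} \<ge> 0"
  using assms unfolding rkhs_real_def by (intro cInf_greatest) (auto simp: rkhs_bound_real_def)

lemma rkhs_norm_real_nonneg: "f \<in> rkhs_real K \<Longrightarrow> rkhs_norm_real K f \<ge> 0"
  unfolding rkhs_norm_real_def using Inf_rkhs_bound_real_nonneg by simp

lemma rkhs_norm_real_sq: "f \<in> rkhs_real K \<Longrightarrow> (rkhs_norm_real K f)\<^sup>2 = Inf {C. rkhs_bound_real K f C}"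
  unfolding rkhs_norm_real_def using Inf_rkhs_bound_real_nonneg by simp

lemma rkhs_norm_real_sq_le:
  assumes "rkhs_bound_real K f C"
  shows "(rkhs_norm_real K f)\<^sup>2 \<le> C"
proof -
  have "f \<in> rkhs_real K" using assms unfolding rkhs_real_def by auto
  then show ?thesis
    using assms by (simp add: rkhs_norm_real_sq cInf_lower[OF _ bdd_below_rkhs_bound_real])
qed

lemma rkhs_bound_real_norm:
  assumes psd: "\<And>c x m. gram_form K c x m \<ge> 0" and f: "f \<in> rkhs_real K"
  shows "rkhs_bound_real K f ((rkhs_norm_real K f)\<^sup>2)"
  unfolding rkhs_bound_real_gram_form
proof (intro conjI allI)
  show "0 \<le> (rkhs_norm_real K f)\<^sup>2" by simp
  fix m and x :: "nat \<Rightarrow> 'a" and c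
  define Q where "Q = gram_form K c x m"
  have bound: "(\<Sum>i<m. c i * f (x i))\<^sup>2 \<le> C * Q" if "rkhs_bound_real K f C" for C
    using that unfolding rkhs_bound_real_gram_form Q_def by blast
  obtain C0 where C0: "rkhs_bound_real K f C0" using f unfolding rkhs_real_def by auto
  have "(\<Sum>i<m. c i * f (x i))\<^sup>2 \<le> (rkhs_norm_real K f)\<^sup>2 * Q"
  proof (cases "Q = 0")
    case True
    then show ?thesis using bound[OF C0] by simp
  next
    case False
    then have "Q > 0" using psd[of c x m] by (simp add: Q_def)
    have "(\<Sum>i<m. c i * f (x i))\<^sup>2 / Q \<le> Inf {C. rkhs_bound_real K f C}"
      using C0 bound \<open>Q > 0\<close> by (intro cInf_greatest) (auto simp: divide_le_eq)
    then show ?thesis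
      using \<open>Q > 0\<close> by (simp add: rkhs_norm_real_sq[OF f] divide_le_eq)
  qed
  then show "(\<Sum>i<m. c i * f (x i))\<^sup>2 \<le> (rkhs_norm_real K f)\<^sup>2 * gram_form K c x m"
    by (simp add: Q_def)
qed

lemma rkhs_bound_real_kernel_section:
  assumes sym: "\<And>x y. K x y = K y x" and psd: "\<And>c x m. gram_form K c x m \<ge> 0"
  shows "rkhs_bound_real K (\<lambda>y. \<Sum>j<m. b j * K y (u j)) (gram_form K b u m)"
  unfolding rkhs_bound_real_gram_form
proof (intro conjI allI)
  show "0 \<le> gram_form K b u m" by (rule psd)
  fix m' and y :: "nat \<Rightarrow> 'a" and c
  show "(\<Sum>i<m'. c i * (\<Sum>j<m. b j * K (y i) (u j)))\<^sup>2 \<le> gram_form K b u m * gram_form K c y m'"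
    by (subst mult.commute) (rule kernel_cauchy_schwarz[OF sym psd])
qed

lemma koopman_bounded_real_gram_le:
  assumes sym: "\<And>x y. K x y = K y x" and psd: "\<And>c x m. gram_form K c x m \<ge> 0"
    and "koopman_bounded_real K F"
  obtains B where "B \<ge> 0" and "\<And>b x m. gram_form K b (\<lambda>i. F (x i)) m \<le> B\<^sup>2 * gram_form K b x m"
proof -
  obtain B where B: "\<And>g. g \<in> rkhs_real K \<Longrightarrow>
      g \<circ> F \<in> rkhs_real K \<and> rkhs_norm_real K (g \<circ> F) \<le> B * rkhs_norm_real K g"
    using assms(3) unfolding koopman_bounded_real_def by blast
  have "gram_form K b (\<lambda>i. F (x i)) m \<le> B\<^sup>2 * gram_form K b x m" for b x m
  proof -
    define Q where "Q = gram_form K b (\<lambda>i. F (x i)) m"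
    define g where "g = (\<lambda>y. \<Sum>j<m. b j * K y (F (x j)))"
    have g_bound: "rkhs_bound_real K g Q"
      unfolding g_def Q_def by (rule rkhs_bound_real_kernel_section[OF sym psd])
    then have g: "g \<in> rkhs_real K" unfolding rkhs_real_def by auto
    with B have gF: "g \<circ> F \<in> rkhs_real K" and norm_gF: "rkhs_norm_real K (g \<circ> F) \<le> B * rkhs_norm_real K g"
      by auto
    have "(\<Sum>i<m. b i * (g \<circ> F) (x i)) = Q"
      by (simp add: g_def Q_def gram_form_def sum_distrib_left mult_ac sym)
    then have "Q\<^sup>2 \<le> (rkhs_norm_real K (g \<circ> F))\<^sup>2 * gram_form K b x m"
      using rkhs_bound_real_norm[OF psd gF] unfolding rkhs_bound_real_gram_form by metis
    also have "\<dots> \<le> (B * rkhs_norm_real K g)\<^sup>2 * gram_form K b x m"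
      by (intro mult_right_mono power_mono norm_gF rkhs_norm_real_nonneg gF psd)
    also have "\<dots> \<le> B\<^sup>2 * Q * gram_form K b x m"
      using rkhs_norm_real_sq_le[OF g_bound]
      by (simp add: power_mult_distrib mult.assoc mult_left_mono mult_right_mono psd)
    finally have "Q * Q \<le> Q * (B\<^sup>2 * gram_form K b x m)"
      by (simp add: power2_eq_square mult_ac)
    moreover have "Q \<ge> 0" unfolding Q_def by (rule psd)
    ultimately show ?thesis
      using psd[of b x m] unfolding Q_def[symmetric]
      by (cases "Q = 0") (simp_all add: mult_le_cancel_left)
  qed
  then show thesis using that[of "\<bar>B\<bar>"] by simp
qed

lemma rkhs_bound_complex_gram_form:
  "rkhs_bound_complex K f C \<longleftrightarrow>
     C \<ge> 0 \<and> (\<forall>m z c. (cmod (\<Sum>i<m. c i * f (z i)))\<^sup>2 \<le> C * gram_form_C K c z m)"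
  by (simp add: rkhs_bound_complex_def gram_form_C_def)

lemma rkhs_bound_complex_comp:
  assumes dom: "\<And>m c z. gram_form_C K c (\<lambda>i. Fc (z i)) m \<le> A * gram_form_C K c z m"
    and "A \<ge> 0" and g: "rkhs_bound_complex K g C"
  shows "rkhs_bound_complex K (g \<circ> Fc) (A * C)"
  unfolding rkhs_bound_complex_gram_form
proof (intro conjI allI)
  have C: "C \<ge> 0" and bound: "\<And>m z c. (cmod (\<Sum>i<m. c i * g (z i)))\<^sup>2 \<le> C * gram_form_C K c z m"
    using g unfolding rkhs_bound_complex_gram_form by auto
  show "0 \<le> A * C" using C \<open>A \<ge> 0\<close> by simp
  fix m z c
  have "(cmod (\<Sum>i<m. c i * (g \<circ> Fc) (z i)))\<^sup>2 \<le> C * gram_form_C K c (\<lambda>i. Fc (z i)) m"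
    using bound[where m=m and z="\<lambda>i. Fc (z i)"] by simp
  also have "\<dots> \<le> C * (A * gram_form_C K c z m)"
    by (rule mult_left_mono[OF dom C])
  finally show "(cmod (\<Sum>i<m. c i * (g \<circ> Fc) (z i)))\<^sup>2 \<le> A * C * gram_form_C K c z m"
    by (simp add: mult_ac)
qed

lemma koopman_bounded_complex_of_gram_le:
  assumes "B > 0" and dom: "\<And>m c z. gram_form_C K c (\<lambda>i. Fc (z i)) m \<le> B\<^sup>2 * gram_form_C K c z m"
  shows "koopman_bounded_complex K Fc"
  unfolding koopman_bounded_complex_def
proof (intro exI ballI conjI)
  fix g assume "g \<in> rkhs_complex K"
  then have ne: "{C. rkhs_bound_complex K g C} \<noteq> {}" unfolding rkhs_complex_def by auto
  have comp: "rkhs_bound_complex K (g \<circ> Fc) (B\<^sup>2 * C)" if "rkhs_bound_complex K g C" for C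
    using rkhs_bound_complex_comp[OF dom _ that] by simp
  with ne show "g \<circ> Fc \<in> rkhs_complex K" unfolding rkhs_complex_def by auto
  have bdd: "bdd_below {C. rkhs_bound_complex K (g \<circ> Fc) C}"
    unfolding rkhs_bound_complex_def by (rule bdd_belowI[of _ 0]) auto
  have "Inf {C. rkhs_bound_complex K (g \<circ> Fc) C} / B\<^sup>2 \<le> Inf {C. rkhs_bound_complex K g C}"
  proof (rule cInf_greatest[OF ne])
    fix C assume "C \<in> {C. rkhs_bound_complex K g C}"
    then have "Inf {C. rkhs_bound_complex K (g \<circ> Fc) C} \<le> B\<^sup>2 * C"
      using comp by (intro cInf_lower[OF _ bdd]) simp
    then show "Inf {C. rkhs_bound_complex K (g \<circ> Fc) C} / B\<^sup>2 \<le> C"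
      using \<open>B > 0\<close> by (simp add: divide_le_eq mult_ac)
  qed
  then have "sqrt (Inf {C. rkhs_bound_complex K (g \<circ> Fc) C}) \<le> sqrt (B\<^sup>2 * Inf {C. rkhs_bound_complex K g C})"
    using \<open>B > 0\<close> by (simp add: divide_le_eq mult_ac)
  then show "rkhs_norm_complex K (g \<circ> Fc) \<le> B * rkhs_norm_complex K g"
    using \<open>B > 0\<close> by (simp add: rkhs_norm_complex_def real_sqrt_mult)
qed

lemma gram_form_C_real_points:
  assumes "\<And>x y. Kc (e x) (e y) = of_real (K x y)"
  shows "gram_form_C Kc c (\<lambda>i. e (x i)) m
    = gram_form K (\<lambda>i. Re (c i)) x m + gram_form K (\<lambda>i. Im (c i)) x m"
  unfolding gram_form_C_def gram_form_def assms
  by (simp add: sum.distrib[symmetric] algebra_simps)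

section \<open>Feature expansion of the Gaussian kernel\<close>

definition index_lists :: "nat \<Rightarrow> ('n::finite) list set" where
  "index_lists N = {\<iota>. length \<iota> = N}"

lemma finite_index_lists [simp]: "finite (index_lists N :: ('n::finite) list set)"
  using finite_lists_length_eq[of "UNIV :: 'n set" N] by (simp add: index_lists_def)

lemma card_index_lists: "card (index_lists N :: ('n::finite) list set) = CARD('n) ^ N"
  using card_lists_length_eq[of "UNIV :: 'n set" N] by (simp add: index_lists_def)

lemma index_lists_Suc: "index_lists (Suc N) = (\<lambda>(j, \<iota>). j # \<iota>) ` (UNIV \<times> index_lists N)"
  by (auto simp: index_lists_def image_iff length_Suc_conv)

lemma power_sum_eq_sum_index_lists:
  fixes u :: "'n::finite \<Rightarrow> 'a::comm_semiring_1"
  shows "(\<Sum>j\<in>UNIV. u j) ^ N = (\<Sum>\<iota>\<in>index_lists N. prod_list (map u \<iota>))"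
proof (induction N)
  case 0
  then show ?case by (simp add: index_lists_def)
next
  case (Suc N)
  have inj: "inj_on (\<lambda>(j, \<iota>). j # \<iota>) (UNIV \<times> index_lists N)"
    by (auto simp: inj_on_def)
  have "(\<Sum>\<iota>\<in>index_lists (Suc N). prod_list (map u \<iota>))
      = (\<Sum>j\<in>UNIV. \<Sum>\<iota>\<in>index_lists N. u j * prod_list (map u \<iota>))"
    unfolding index_lists_Suc sum.reindex[OF inj] by (simp add: sum.cartesian_product split_def)
  also have "\<dots> = (\<Sum>j\<in>UNIV. u j) * (\<Sum>\<iota>\<in>index_lists N. prod_list (map u \<iota>))"
    by (simp add: sum_product)
  finally show ?case using Suc by simp
qed

text \<open>The features come from expanding exp (z . cnj w) over ordered multi-indices; they turn every
  Gram form of gauss_kernel_C into a sum of squares, its feature energy.\<close>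

definition gauss_feature :: "('n::finite) list \<Rightarrow> complex^'n \<Rightarrow> complex" where
  "gauss_feature \<iota> z = exp (-(1/2) * (\<Sum>j\<in>UNIV. (z $ j)\<^sup>2)) * prod_list (map (\<lambda>j. z $ j) \<iota>)"

definition feature_energy :: "(('n::finite) list \<Rightarrow> complex) \<Rightarrow> real" where
  "feature_energy u = (\<Sum>N. (\<Sum>\<iota>\<in>index_lists N. (cmod (u \<iota>))\<^sup>2) / fact N)"

lemma gauss_kernel_C_split:
  "gauss_kernel_C z w = exp (-(1/2) * (\<Sum>j\<in>UNIV. (z $ j)\<^sup>2))
     * cnj (exp (-(1/2) * (\<Sum>j\<in>UNIV. (w $ j)\<^sup>2))) * exp (\<Sum>j\<in>UNIV. z $ j * cnj (w $ j))"
proof -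
  have "(\<Sum>j\<in>UNIV. (z $ j - cnj (w $ j))\<^sup>2) = (\<Sum>j\<in>UNIV. (z $ j)\<^sup>2)
      + (\<Sum>j\<in>UNIV. (cnj (w $ j))\<^sup>2) - 2 * (\<Sum>j\<in>UNIV. z $ j * cnj (w $ j))"
    by (simp add: power2_diff sum.distrib sum_subtractf sum_distrib_left mult.assoc)
  then have "- (1/2) * (\<Sum>j\<in>UNIV. (z $ j - cnj (w $ j))\<^sup>2) = -(1/2) * (\<Sum>j\<in>UNIV. (z $ j)\<^sup>2)
      + -(1/2) * (\<Sum>j\<in>UNIV. (cnj (w $ j))\<^sup>2) + (\<Sum>j\<in>UNIV. z $ j * cnj (w $ j))"
    by (simp add: field_simps)
  then show ?thesis
    unfolding gauss_kernel_C_def by (simp only: exp_add exp_cnj) simp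
qed

lemma gauss_kernel_C_feature_sums:
  fixes z w :: "complex^'n::finite"
  shows "(\<lambda>N. (\<Sum>\<iota>\<in>index_lists N. gauss_feature \<iota> z * cnj (gauss_feature \<iota> w)) / fact N)
    sums gauss_kernel_C z w"
proof -
  define s where "s = (\<Sum>j\<in>UNIV. z $ j * cnj (w $ j))"
  define e where "e = exp (-(1/2) * (\<Sum>j\<in>UNIV. (z $ j)\<^sup>2)) * cnj (exp (-(1/2) * (\<Sum>j\<in>UNIV. (w $ j)\<^sup>2)))"
  have "(\<lambda>N. e * (s ^ N / fact N)) sums (e * exp s)"
    using exp_converges[of s] by (intro sums_mult) (simp add: scaleR_conv_of_real divide_inverse mult_ac)
  moreover have "e * (s ^ N / fact N)
      = (\<Sum>\<iota>\<in>index_lists N. gauss_feature \<iota> z * cnj (gauss_feature \<iota> w)) / fact N" for N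
  proof -
    have "prod_list (map (\<lambda>j. z $ j * cnj (w $ j)) \<iota>)
        = prod_list (map (\<lambda>j. z $ j) \<iota>) * cnj (prod_list (map (\<lambda>j. w $ j) \<iota>))" for \<iota> :: "'n list"
      by (induction \<iota>) (simp_all add: mult_ac)
    then have "s ^ N = (\<Sum>\<iota>\<in>index_lists N. prod_list (map (\<lambda>j. z $ j) \<iota>) * cnj (prod_list (map (\<lambda>j. w $ j) \<iota>)))"
      by (simp add: s_def power_sum_eq_sum_index_lists)
    then show ?thesis
      by (simp add: gauss_feature_def e_def sum_distrib_left sum_divide_distrib mult_ac)
  qed
  ultimately show ?thesis
    by (simp add: gauss_kernel_C_split e_def s_def)
qed

lemma gram_form_C_gauss_sums:
  "(\<lambda>N. (\<Sum>\<iota>\<in>index_lists N. (cmod (\<Sum>i<m. c i * gauss_feature \<iota> (z i)))\<^sup>2) / fact N)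
     sums gram_form_C gauss_kernel_C c z m"
proof -
  define S where "S = (\<lambda>\<iota>. \<Sum>i<m. c i * gauss_feature \<iota> (z i))"
  have "(\<lambda>N. \<Sum>i<m. \<Sum>j<m. cnj (c i) * c j *
          ((\<Sum>\<iota>\<in>index_lists N. gauss_feature \<iota> (z j) * cnj (gauss_feature \<iota> (z i))) / fact N))
      sums (\<Sum>i<m. \<Sum>j<m. cnj (c i) * c j * gauss_kernel_C (z j) (z i))"
    by (intro sums_sum sums_mult gauss_kernel_C_feature_sums)
  moreover have "(\<Sum>i<m. \<Sum>j<m. cnj (c i) * c j *
          ((\<Sum>\<iota>\<in>index_lists N. gauss_feature \<iota> (z j) * cnj (gauss_feature \<iota> (z i))) / fact N))
      = of_real ((\<Sum>\<iota>\<in>index_lists N. (cmod (S \<iota>))\<^sup>2) / fact N)" for N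
  proof -
    have "S \<iota> * cnj (S \<iota>) = (\<Sum>i<m. \<Sum>j<m. cnj (c i) * c j * (gauss_feature \<iota> (z j) * cnj (gauss_feature \<iota> (z i))))" for \<iota>
      unfolding S_def cnj_sum sum_product by (subst sum.swap) (simp add: mult_ac)
    then have "(\<Sum>\<iota>\<in>index_lists N. S \<iota> * cnj (S \<iota>)) / fact N
        = (\<Sum>i<m. \<Sum>j<m. cnj (c i) * c j *
            ((\<Sum>\<iota>\<in>index_lists N. gauss_feature \<iota> (z j) * cnj (gauss_feature \<iota> (z i))) / fact N))"
      by (simp add: sum_divide_distrib sum_distrib_left mult.assoc sum.swap[of _ "index_lists N"])
    then show ?thesis
      unfolding of_real_divide of_real_sum complex_norm_square by simp
  qed
  ultimately have "(\<lambda>N. complex_of_real ((\<Sum>\<iota>\<in>index_lists N. (cmod (S \<iota>))\<^sup>2) / fact N))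
      sums (\<Sum>i<m. \<Sum>j<m. cnj (c i) * c j * gauss_kernel_C (z j) (z i))"
    by simp
  from sums_Re[OF this] show ?thesis
    unfolding gram_form_C_def S_def Re_complex_of_real .
qed

lemma gram_form_C_gauss_eq_feature_energy:
  "gram_form_C gauss_kernel_C c z m = feature_energy (\<lambda>\<iota>. \<Sum>i<m. c i * gauss_feature \<iota> (z i))"
  unfolding feature_energy_def by (rule sums_unique[OF gram_form_C_gauss_sums])

lemma gram_form_C_gauss_nonneg: "gram_form_C gauss_kernel_C c z m \<ge> 0"
  by (rule sums_le[OF _ sums_zero gram_form_C_gauss_sums]) (auto intro!: divide_nonneg_pos sum_nonneg)

lemma gauss_kernel_C_cvec: "gauss_kernel_C (cvec x) (cvec y) = of_real (gauss_kernel x y)"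
proof -
  have "(norm (x - y))\<^sup>2 = (\<Sum>j\<in>UNIV. (x $ j - y $ j)\<^sup>2)"
    by (simp only: power2_norm_eq_inner) (simp add: inner_vec_def power2_eq_square)
  then have "(\<Sum>j\<in>UNIV. (cvec x $ j - cnj (cvec y $ j))\<^sup>2) = of_real ((norm (x - y))\<^sup>2)"
    by (simp add: cvec_def)
  then show ?thesis
    by (simp add: gauss_kernel_C_def gauss_kernel_def flip: exp_of_real)
qed

lemma gram_form_C_gauss_cvec:
  "gram_form_C gauss_kernel_C c (\<lambda>i. cvec (x i)) m
    = gram_form gauss_kernel (\<lambda>i. Re (c i)) x m + gram_form gauss_kernel (\<lambda>i. Im (c i)) x m"
  by (rule gram_form_C_real_points) (rule gauss_kernel_C_cvec)

lemma gram_form_gauss_nonneg: "gram_form gauss_kernel b x m \<ge> 0"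
  using gram_form_C_gauss_nonneg[of "\<lambda>i. of_real (b i)" "\<lambda>i. cvec (x i)" m]
  by (simp add: gram_form_C_gauss_cvec gram_form_def)

lemma gauss_kernel_sym: "gauss_kernel x y = gauss_kernel y x"
  by (simp add: gauss_kernel_def norm_minus_commute)

section \<open>Finite differences and Taylor coefficients\<close>

text \<open>The p-th forward difference, with step 1, of t |-> t^j at c.\<close>

definition fdiff_pow :: "nat \<Rightarrow> nat \<Rightarrow> real \<Rightarrow> real" where
  "fdiff_pow p j c = (\<Sum>a\<le>p. (-1) ^ (p - a) * real (p choose a) * (real a + c) ^ j)"

lemma fdiff_pow_0_right: "fdiff_pow p 0 c = (if p = 0 then 1 else 0)"
proof -
  have "fdiff_pow p 0 c = (-1) ^ p * (\<Sum>a\<le>p. (-1) ^ a * real (p choose a))"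
    unfolding fdiff_pow_def sum_distrib_left
    by (intro sum.cong refl) (simp add: power_diff_conv_inverse)
  then show ?thesis
    using choose_alternating_sum[where 'a=real, of p] by simp
qed

lemma fdiff_pow_Suc_Suc:
  "fdiff_pow (Suc q) (Suc j) c = real (Suc q) * fdiff_pow q j (c + 1) + c * fdiff_pow (Suc q) j c"
proof -
  have "fdiff_pow (Suc q) (Suc j) c
      = (\<Sum>a\<le>Suc q. (-1) ^ (Suc q - a) * real (Suc q choose a) * real a * (real a + c) ^ j)
        + c * fdiff_pow (Suc q) j c"
    unfolding fdiff_pow_def sum_distrib_left sum.distrib[symmetric]
    by (intro sum.cong refl) (simp add: algebra_simps del: binomial_Suc_Suc)
  also have "(\<Sum>a\<le>Suc q. (-1) ^ (Suc q - a) * real (Suc q choose a) * real a * (real a + c) ^ j)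
      = (\<Sum>b\<le>q. (-1) ^ (Suc q - Suc b) * real (Suc q choose Suc b) * real (Suc b) * (real (Suc b) + c) ^ j)"
    by (subst sum.atMost_Suc_shift) simp
  also have "\<dots> = (\<Sum>b\<le>q. real (Suc q) * ((-1) ^ (q - b) * real (q choose b) * (real b + (c + 1)) ^ j))"
  proof (intro sum.cong refl)
    fix b
    have binom: "real (Suc q choose Suc b) * real (Suc b) = real (Suc q) * real (q choose b)"
      using Suc_times_binomial_eq[of q b] by (metis of_nat_mult)
    have "real (Suc b) + c = real b + (c + 1)" by simp
    then show "(-1) ^ (Suc q - Suc b) * real (Suc q choose Suc b) * real (Suc b) * (real (Suc b) + c) ^ j
        = real (Suc q) * ((-1) ^ (q - b) * real (q choose b) * (real b + (c + 1)) ^ j)"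
      unfolding diff_Suc_Suc by (metis binom mult.assoc mult.left_commute)
  qed
  also have "\<dots> = real (Suc q) * fdiff_pow q j (c + 1)"
    by (simp add: fdiff_pow_def sum_distrib_left)
  finally show ?thesis .
qed

lemma fdiff_pow_below_and_diag: "(\<forall>p c. j < p \<longrightarrow> fdiff_pow p j c = 0) \<and> (\<forall>c. fdiff_pow j j c = fact j)"
proof (induction j)
  case 0
  then show ?case by (simp add: fdiff_pow_0_right)
next
  case (Suc j)
  have "fdiff_pow p (Suc j) c = 0" if "Suc j < p" for p c
    using Suc that by (cases p) (auto simp: fdiff_pow_Suc_Suc)
  moreover have "fdiff_pow (Suc j) (Suc j) c = fact (Suc j)" for c
    using Suc by (simp add: fdiff_pow_Suc_Suc)
  ultimately show ?case by blast
qed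

lemma fdiff_pow_eq_0: "j < p \<Longrightarrow> fdiff_pow p j c = 0"
  using fdiff_pow_below_and_diag by blast

lemma fdiff_pow_diag: "fdiff_pow p p c = fact p"
  using fdiff_pow_below_and_diag by blast

lemma abs_fdiff_pow_le: "\<bar>fdiff_pow p j 0\<bar> \<le> 2 ^ p * real p ^ j"
proof -
  have "\<bar>fdiff_pow p j 0\<bar> \<le> (\<Sum>a\<le>p. real (p choose a) * real a ^ j)"
    unfolding fdiff_pow_def by (rule order_trans[OF sum_abs]) (simp add: abs_mult)
  also have "\<dots> \<le> (\<Sum>a\<le>p. real (p choose a) * real p ^ j)"
    by (intro sum_mono mult_left_mono power_mono) auto
  also have "\<dots> = 2 ^ p * real p ^ j"
    by (simp add: sum_distrib_right[symmetric] choose_row_sum flip: of_nat_sum)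
  finally show ?thesis .
qed

lemma abs_fdiff_pow_scaled_le:
  assumes "p < j" and "0 < h" and "h \<le> 1"
  shows "\<bar>h ^ j * fdiff_pow p j 0 / (fact p * h ^ p)\<bar> \<le> h * 2 ^ p * real p ^ j"
proof -
  have "\<bar>h ^ j * fdiff_pow p j 0 / (fact p * h ^ p)\<bar> = h ^ (j - p) * \<bar>fdiff_pow p j 0\<bar> / fact p"
    using assms by (simp add: abs_mult power_diff)
  also have "\<dots> \<le> h ^ (j - p) * \<bar>fdiff_pow p j 0\<bar> / 1"
    using assms by (intro divide_left_mono) auto
  also have "\<dots> \<le> h * (2 ^ p * real p ^ j)"
    unfolding div_by_1
  proof (rule mult_mono)
    show "h ^ (j - p) \<le> h"
      using assms power_decreasing[of 1 "j - p" h] by simp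
  qed (use abs_fdiff_pow_le assms in auto)
  finally show ?thesis by simp
qed

definition taylor_coeff :: "(complex \<Rightarrow> complex) \<Rightarrow> nat \<Rightarrow> complex" where
  "taylor_coeff G p = (deriv ^^ p) G 0 / fact p"

lemma taylor_coeff_sums:
  assumes "G holomorphic_on UNIV"
  shows "(\<lambda>j. taylor_coeff G j * s ^ j) sums G s"
proof -
  have "(\<lambda>n. (deriv ^^ n) G 0 / fact n * (s - 0) ^ n) sums G s"
    by (rule holomorphic_power_series[of G 0 "cmod s + 1"]) (auto intro: holomorphic_on_subset[OF assms])
  then show ?thesis by (simp add: taylor_coeff_def)
qed

lemma norm_taylor_coeff_le:
  assumes "G holomorphic_on UNIV" and "R > 0" and "\<And>s. cmod s \<le> R \<Longrightarrow> cmod (G s) \<le> M"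
  shows "cmod (taylor_coeff G p) \<le> M / R ^ p"
proof -
  have "norm ((deriv ^^ p) G 0) \<le> fact p * M / R ^ p"
  proof (rule Cauchy_inequality)
    show "G holomorphic_on ball 0 R" "continuous_on (cball 0 R) G"
      using assms(1) holomorphic_on_subset holomorphic_on_imp_continuous_on by blast+
  qed (use assms in auto)
  then show ?thesis
    by (simp add: taylor_coeff_def norm_divide field_simps)
qed

lemma norm_taylor_coeff_le_half_pow:
  assumes "G holomorphic_on UNIV" and "R \<ge> 2" and "\<And>s. cmod s \<le> R \<Longrightarrow> cmod (G s) \<le> M"
  shows "cmod (taylor_coeff G p) \<le> M * (1/2) ^ p"
proof -
  have "M \<ge> 0" using assms(2) assms(3)[of 0] by (auto intro: order_trans[OF norm_ge_zero])
  have "cmod (taylor_coeff G p) \<le> M / R ^ p"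
    using assms by (intro norm_taylor_coeff_le) auto
  also have "\<dots> \<le> M / 2 ^ p"
    using assms(2) \<open>M \<ge> 0\<close> by (intro divide_left_mono power_mono) auto
  finally show ?thesis by (simp add: power_one_over)
qed

text \<open>Approximates taylor_coeff G p using only the values of G at the real points 0, h, ..., p h.\<close>

definition diff_quotient :: "(complex \<Rightarrow> complex) \<Rightarrow> nat \<Rightarrow> real \<Rightarrow> complex" where
  "diff_quotient G p h = (\<Sum>a\<le>p. of_real ((-1) ^ (p - a) * real (p choose a)) * G (of_real (real a * h)))
     / of_real (fact p * h ^ p)"

lemma diff_quotient_sums:
  assumes "G holomorphic_on UNIV"
  shows "(\<lambda>j. taylor_coeff G j * of_real (h ^ j * fdiff_pow p j 0 / (fact p * h ^ p)))
    sums diff_quotient G p h"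
proof -
  define w where "w = (\<lambda>a. complex_of_real ((-1) ^ (p - a) * real (p choose a)))"
  have "(\<lambda>j. \<Sum>a\<le>p. w a * (taylor_coeff G j * (of_real (real a * h)) ^ j))
      sums (\<Sum>a\<le>p. w a * G (of_real (real a * h)))"
    by (intro sums_sum sums_mult taylor_coeff_sums assms)
  moreover have "(\<Sum>a\<le>p. w a * (taylor_coeff G j * (of_real (real a * h)) ^ j))
      = taylor_coeff G j * of_real (h ^ j * fdiff_pow p j 0)" for j
    by (simp add: w_def fdiff_pow_def sum_distrib_left power_mult_distrib mult_ac)
  ultimately have "(\<lambda>j. taylor_coeff G j * of_real (h ^ j * fdiff_pow p j 0) / of_real (fact p * h ^ p))
      sums diff_quotient G p h"
    unfolding diff_quotient_def w_def by (intro sums_divide) simp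
  then show ?thesis
    by (simp add: divide_inverse mult_ac)
qed

lemma norm_diff_quotient_minus_taylor_coeff_le:
  assumes hol: "G holomorphic_on UNIV" and h: "0 < h" "h \<le> 1" and R: "R > 0" "2 * real p \<le> R"
    and M: "\<And>s. cmod s \<le> R \<Longrightarrow> cmod (G s) \<le> M"
  shows "cmod (diff_quotient G p h - taylor_coeff G p) \<le> h * M * 2 ^ (p + 1)"
proof -
  have M0: "M \<ge> 0" using M[of 0] R by (auto intro: order_trans[OF norm_ge_zero])
  define t where "t = (\<lambda>j. taylor_coeff G j * of_real (h ^ j * fdiff_pow p j 0 / (fact p * h ^ p)))"
  define e where "e = (\<lambda>j. t j - (if j = p then taylor_coeff G p else 0))"
  have "e sums (diff_quotient G p h - taylor_coeff G p)"
    unfolding e_def t_def by (intro sums_diff diff_quotient_sums hol sums_single)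
  moreover have "(\<lambda>j. h * M * 2 ^ p * (1/2) ^ j) sums (h * M * 2 ^ p * (1 / (1 - 1/2)))"
    by (intro sums_mult geometric_sums) simp
  moreover have "norm (e j) \<le> h * M * 2 ^ p * (1/2) ^ j" for j
  proof (cases "j \<le> p")
    case True
    then have "e j = 0"
      using h by (cases "j = p") (simp_all add: e_def t_def fdiff_pow_diag fdiff_pow_eq_0)
    then show ?thesis using M0 h by simp
  next
    case False
    then have "norm (e j) = cmod (taylor_coeff G j) * \<bar>h ^ j * fdiff_pow p j 0 / (fact p * h ^ p)\<bar>"
      by (simp add: e_def t_def norm_mult del: of_real_divide of_real_mult)
    also have "\<dots> \<le> (M / R ^ j) * (h * 2 ^ p * real p ^ j)"
      using False h M0 R by (intro mult_mono norm_taylor_coeff_le[OF hol R(1) M] abs_fdiff_pow_scaled_le) auto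
    also have "\<dots> = h * M * 2 ^ p * (real p / R) ^ j"
      by (simp add: power_divide)
    also have "\<dots> \<le> h * M * 2 ^ p * (1/2) ^ j"
      using R h M0 by (intro mult_left_mono power_mono) (auto simp: divide_le_eq)
    finally show ?thesis .
  qed
  ultimately have "cmod (diff_quotient G p h - taylor_coeff G p) \<le> h * M * 2 ^ p * (1 / (1 - 1/2))"
    by (rule norm_sums_le)
  then show ?thesis by simp
qed

text \<open>Both approximate G i = sum p. i^p * taylor_coeff G p; diff_approx only samples G on the real axis.\<close>

definition taylor_approx :: "nat \<Rightarrow> (complex \<Rightarrow> complex) \<Rightarrow> complex" where
  "taylor_approx N G = (\<Sum>p<N. \<i> ^ p * taylor_coeff G p)"

definition diff_approx :: "nat \<Rightarrow> real \<Rightarrow> (complex \<Rightarrow> complex) \<Rightarrow> complex" where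
  "diff_approx N h G = (\<Sum>p<N. \<i> ^ p * diff_quotient G p h)"

lemma norm_diff_approx_minus_taylor_approx_le:
  assumes hol: "G holomorphic_on UNIV" and h: "0 < h" "h \<le> 1" and R: "R > 0" "2 * real N \<le> R"
    and M: "\<And>s. cmod s \<le> R \<Longrightarrow> cmod (G s) \<le> M"
  shows "cmod (diff_approx N h G - taylor_approx N G) \<le> h * M * 2 ^ (N + 1)"
proof -
  have M0: "M \<ge> 0" using M[of 0] R by (auto intro: order_trans[OF norm_ge_zero])
  have "cmod (diff_approx N h G - taylor_approx N G) = cmod (\<Sum>p<N. \<i> ^ p * (diff_quotient G p h - taylor_coeff G p))"
    by (simp add: diff_approx_def taylor_approx_def sum_subtractf algebra_simps)
  also have "\<dots> \<le> (\<Sum>p<N. h * M * 2 ^ (p + 1))"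
  proof (rule order_trans[OF norm_sum], intro sum_mono)
    fix p assume "p \<in> {..<N}"
    then have "2 * real p \<le> R" using R by simp
    then show "cmod (\<i> ^ p * (diff_quotient G p h - taylor_coeff G p)) \<le> h * M * 2 ^ (p + 1)"
      using norm_diff_quotient_minus_taylor_coeff_le[OF hol h R(1) _ M] by (simp add: norm_mult norm_power)
  qed
  also have "\<dots> = h * M * (\<Sum>p<N. 2 ^ (p + 1))"
    by (simp add: sum_distrib_left)
  also have "(\<Sum>p<N. 2 ^ (p + 1)) \<le> (2::real) ^ (N + 1)"
    by (induction N) auto
  finally show ?thesis
    using h M0 by (simp add: mult_left_mono)
qed

lemma norm_taylor_approx_le:
  assumes hol: "G holomorphic_on UNIV" and R: "R \<ge> 2" and M: "\<And>s. cmod s \<le> R \<Longrightarrow> cmod (G s) \<le> M"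
  shows "cmod (taylor_approx N G) \<le> 2 * M"
proof -
  have M0: "M \<ge> 0" using M[of 0] R by (auto intro: order_trans[OF norm_ge_zero])
  have "cmod (taylor_approx N G) \<le> (\<Sum>p<N. M * (1/2) ^ p)"
    unfolding taylor_approx_def
    by (intro order_trans[OF norm_sum] sum_mono)
      (simp add: norm_mult norm_power norm_taylor_coeff_le_half_pow[OF hol R M])
  also have "\<dots> = 2 * M * (1 - (1/2) ^ N)"
    by (simp add: sum_distrib_left[symmetric] sum_gp_strict)
  also have "\<dots> \<le> 2 * M"
    using M0 by (simp add: mult_left_le)
  finally show ?thesis .
qed

lemma norm_taylor_approx_minus_le:
  assumes hol: "G holomorphic_on UNIV" and R: "R \<ge> 2" and M: "\<And>s. cmod s \<le> R \<Longrightarrow> cmod (G s) \<le> M"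
  shows "cmod (taylor_approx N G - G \<i>) \<le> 2 * M / 2 ^ N"
proof -
  have "(\<lambda>j. taylor_coeff G (j + N) * \<i> ^ (j + N)) sums (G \<i> - (\<Sum>j<N. taylor_coeff G j * \<i> ^ j))"
    using sums_split_initial_segment[OF taylor_coeff_sums[OF hol, of \<i>], of N] by simp
  moreover have "(\<lambda>j. M / 2 ^ N * (1/2) ^ j) sums (M / 2 ^ N * (1 / (1 - 1/2)))"
    by (intro sums_mult geometric_sums) simp
  moreover have "cmod (taylor_coeff G (j + N) * \<i> ^ (j + N)) \<le> M / 2 ^ N * (1/2) ^ j" for j
    using norm_taylor_coeff_le_half_pow[OF hol R M, of "j + N"]
    by (simp add: norm_mult norm_power power_add power_one_over mult.commute)
  ultimately have "cmod (G \<i> - (\<Sum>j<N. taylor_coeff G j * \<i> ^ j)) \<le> M / 2 ^ N * (1 / (1 - 1/2))"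
    by (rule norm_sums_le)
  then show ?thesis
    by (simp add: taylor_approx_def norm_minus_commute mult_ac)
qed

definition diff_approx_weight :: "nat \<Rightarrow> real \<Rightarrow> nat \<Rightarrow> complex" where
  "diff_approx_weight N h a = (\<Sum>p<N. if a \<le> p
     then \<i> ^ p * of_real ((-1) ^ (p - a) * real (p choose a)) / of_real (fact p * h ^ p) else 0)"

lemma diff_approx_eq_samples:
  "diff_approx N h G = (\<Sum>a<N. diff_approx_weight N h a * G (of_real (real a * h)))"
proof -
  define w where "w = (\<lambda>p a. \<i> ^ p * of_real ((-1) ^ (p - a) * real (p choose a)) / of_real (fact p * h ^ p)
    * G (of_real (real a * h)))"
  have "\<i> ^ p * diff_quotient G p h = (\<Sum>a<N. if a \<le> p then w p a else 0)" if "p < N" for p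
  proof -
    have "(\<Sum>a<N. if a \<le> p then w p a else 0) = (\<Sum>a\<in>{..<N} \<inter> {a. a \<le> p}. w p a)"
      by (subst sum.inter_restrict) simp_all
    also have "{..<N} \<inter> {a. a \<le> p} = {..p}" using that by auto
    finally show ?thesis
      by (simp add: w_def diff_quotient_def sum_divide_distrib sum_distrib_left mult_ac)
  qed
  then have "diff_approx N h G = (\<Sum>p<N. \<Sum>a<N. if a \<le> p then w p a else 0)"
    unfolding diff_approx_def by (intro sum.cong) auto
  also have "\<dots> = (\<Sum>a<N. \<Sum>p<N. if a \<le> p then w p a else 0)"
    by (rule sum.swap)
  also have "\<dots> = (\<Sum>a<N. diff_approx_weight N h a * G (of_real (real a * h)))"
    unfolding diff_approx_weight_def sum_distrib_right by (intro sum.cong refl) (simp add: w_def)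
  finally show ?thesis .
qed

section \<open>Feature energies along complex lines\<close>

lemma sum_sq_norm_index_lists_le:
  fixes W :: "('n::finite) list \<Rightarrow> complex"
  assumes "\<And>\<iota>. \<iota> \<in> index_lists N \<Longrightarrow> cmod (W \<iota>) \<le> D * P ^ N"
  shows "(\<Sum>\<iota>\<in>index_lists N. (cmod (W \<iota>))\<^sup>2) \<le> D\<^sup>2 * (real CARD('n) * P\<^sup>2) ^ N"
proof -
  have "(\<Sum>\<iota>\<in>index_lists N. (cmod (W \<iota>))\<^sup>2) \<le> (\<Sum>\<iota>\<in>(index_lists N :: 'n list set). (D * P ^ N)\<^sup>2)"
    using assms by (intro sum_mono power_mono) auto
  then show ?thesis
    by (simp add: card_index_lists power_mult_distrib flip: power_mult)
      (simp add: power_mult mult_ac)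
qed

lemma exp_real_sums: "(\<lambda>N. x ^ N / fact N) sums exp (x::real)"
  using exp_converges[of x] by (simp add: divide_inverse mult_ac scaleR_conv_of_real)

lemma summable_feature_energy:
  fixes W :: "('n::finite) list \<Rightarrow> complex"
  assumes "\<And>N \<iota>. \<iota> \<in> index_lists N \<Longrightarrow> cmod (W \<iota>) \<le> D * P ^ N"
  shows "summable (\<lambda>N. (\<Sum>\<iota>\<in>index_lists N. (cmod (W \<iota>))\<^sup>2) / fact N)"
proof (rule summable_comparison_test')
  show "summable (\<lambda>N. D\<^sup>2 * ((real CARD('n) * P\<^sup>2) ^ N / fact N))"
    by (intro summable_mult sums_summable[OF exp_real_sums])
  show "norm ((\<Sum>\<iota>\<in>index_lists N. (cmod (W \<iota>))\<^sup>2) / fact N) \<le> D\<^sup>2 * ((real CARD('n) * P\<^sup>2) ^ N / fact N)" for N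
    using sum_sq_norm_index_lists_le[of N W D P] assms
    by (simp add: sum_nonneg divide_right_mono)
qed

lemma abs_sum_sq_norm_diff_index_lists_le:
  fixes U V :: "('n::finite) list \<Rightarrow> complex"
  assumes UV: "\<And>\<iota>. \<iota> \<in> index_lists N \<Longrightarrow> cmod (U \<iota> - V \<iota>) \<le> \<delta> * D * P ^ N"
    and V: "\<And>\<iota>. \<iota> \<in> index_lists N \<Longrightarrow> cmod (V \<iota>) \<le> D * P ^ N"
    and "\<delta> \<ge> 0" "D \<ge> 0" "P \<ge> 0"
  shows "\<bar>\<Sum>\<iota>\<in>index_lists N. (cmod (U \<iota>))\<^sup>2 - (cmod (V \<iota>))\<^sup>2\<bar>
    \<le> \<delta> * (\<delta> + 2) * D\<^sup>2 * (real CARD('n) * P\<^sup>2) ^ N"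
proof -
  have "\<bar>(cmod (U \<iota>))\<^sup>2 - (cmod (V \<iota>))\<^sup>2\<bar> \<le> (\<delta> * D * P ^ N) * ((\<delta> + 2) * D * P ^ N)"
    if "\<iota> \<in> index_lists N" for \<iota>
  proof -
    have "(cmod (U \<iota>))\<^sup>2 - (cmod (V \<iota>))\<^sup>2 = (cmod (U \<iota>) - cmod (V \<iota>)) * (cmod (U \<iota>) + cmod (V \<iota>))"
      by (simp add: power2_eq_square algebra_simps)
    then have "\<bar>(cmod (U \<iota>))\<^sup>2 - (cmod (V \<iota>))\<^sup>2\<bar> = \<bar>cmod (U \<iota>) - cmod (V \<iota>)\<bar> * (cmod (U \<iota>) + cmod (V \<iota>))"
      by (simp add: abs_mult)
    also have "\<dots> \<le> cmod (U \<iota> - V \<iota>) * (cmod (U \<iota>) + cmod (V \<iota>))"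
      by (intro mult_right_mono norm_triangle_ineq3) auto
    also have "\<dots> \<le> (\<delta> * D * P ^ N) * ((cmod (V \<iota>) + cmod (U \<iota> - V \<iota>)) + cmod (V \<iota>))"
      using norm_triangle_sub[of "U \<iota>" "V \<iota>"] assms
      by (intro mult_mono add_mono UV that) auto
    also have "\<dots> \<le> (\<delta> * D * P ^ N) * ((D * P ^ N + \<delta> * D * P ^ N) + D * P ^ N)"
      using assms by (intro mult_left_mono add_mono UV V that) auto
    finally show ?thesis by (simp add: algebra_simps)
  qed
  then have "\<bar>\<Sum>\<iota>\<in>index_lists N. (cmod (U \<iota>))\<^sup>2 - (cmod (V \<iota>))\<^sup>2\<bar>
      \<le> (\<Sum>\<iota>\<in>(index_lists N :: 'n list set). (\<delta> * D * P ^ N) * ((\<delta> + 2) * D * P ^ N))"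
    by (intro order_trans[OF sum_abs] sum_mono)
  also have "\<dots> = \<delta> * (\<delta> + 2) * D\<^sup>2 * (real CARD('n) * P\<^sup>2) ^ N"
    by (simp add: card_index_lists power_mult_distrib power2_eq_square flip: power_mult)
  finally show ?thesis .
qed

lemma feature_energy_perturb:
  fixes U V :: "('n::finite) list \<Rightarrow> complex"
  assumes UV: "\<And>N \<iota>. \<iota> \<in> index_lists N \<Longrightarrow> cmod (U \<iota> - V \<iota>) \<le> \<delta> * D * P ^ N"
    and V: "\<And>N \<iota>. \<iota> \<in> index_lists N \<Longrightarrow> cmod (V \<iota>) \<le> D * P ^ N"
    and "\<delta> \<ge> 0" "D \<ge> 0" "P \<ge> 0"
  shows "\<bar>feature_energy U - feature_energy V\<bar> \<le> \<delta> * (\<delta> + 2) * D\<^sup>2 * exp (real CARD('n) * P\<^sup>2)"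
proof -
  define x where "x = real CARD('n) * P\<^sup>2"
  define u where "u = (\<lambda>N. (\<Sum>\<iota>\<in>index_lists N. (cmod (U \<iota>))\<^sup>2) / fact N)"
  define v where "v = (\<lambda>N. (\<Sum>\<iota>\<in>index_lists N. (cmod (V \<iota>))\<^sup>2) / fact N)"
  have U: "cmod (U \<iota>) \<le> (\<delta> + 1) * D * P ^ N" if "\<iota> \<in> index_lists N" for N \<iota>
    using norm_triangle_sub[of "U \<iota>" "V \<iota>"] UV[OF that] V[OF that] by (simp add: algebra_simps)
  have diff_sums: "(\<lambda>N. u N - v N) sums (feature_energy U - feature_energy V)"
    unfolding u_def v_def feature_energy_def
    by (intro sums_diff summable_sums summable_feature_energy[OF U] summable_feature_energy[OF V])
  have bound_sums: "(\<lambda>N. \<delta> * (\<delta> + 2) * D\<^sup>2 * (x ^ N / fact N)) sums (\<delta> * (\<delta> + 2) * D\<^sup>2 * exp x)"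
    by (intro sums_mult exp_real_sums)
  have "norm (u N - v N) \<le> \<delta> * (\<delta> + 2) * D\<^sup>2 * (x ^ N / fact N)" for N
    using abs_sum_sq_norm_diff_index_lists_le[of N U V \<delta> D P] divide_right_mono[of _ _ "fact N"] assms
    by (simp add: u_def v_def x_def diff_divide_distrib[symmetric] sum_subtractf)
  from norm_sums_le[OF diff_sums bound_sums this] show ?thesis
    unfolding x_def by simp
qed

lemma feature_energy_combination_perturb:
  fixes u w :: "nat \<Rightarrow> ('n::finite) list \<Rightarrow> complex" and m :: nat
  assumes uw: "\<And>k N \<iota>. k < m \<Longrightarrow> \<iota> \<in> index_lists N \<Longrightarrow> cmod (u k \<iota> - w k \<iota>) \<le> \<delta> * D * P ^ N"
    and w: "\<And>k N \<iota>. k < m \<Longrightarrow> \<iota> \<in> index_lists N \<Longrightarrow> cmod (w k \<iota>) \<le> D * P ^ N"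
    and \<delta>: "0 \<le> \<delta>" "\<delta> \<le> 1" and "D \<ge> 0" "P \<ge> 0"
  shows "\<bar>feature_energy (\<lambda>\<iota>. \<Sum>k<m. a k * u k \<iota>) - feature_energy (\<lambda>\<iota>. \<Sum>k<m. a k * w k \<iota>)\<bar>
    \<le> \<delta> * (3 * ((\<Sum>k<m. cmod (a k)) * D)\<^sup>2 * exp (real CARD('n) * P\<^sup>2))"
proof -
  have "\<bar>feature_energy (\<lambda>\<iota>. \<Sum>k<m. a k * u k \<iota>) - feature_energy (\<lambda>\<iota>. \<Sum>k<m. a k * w k \<iota>)\<bar>
    \<le> \<delta> * (\<delta> + 2) * ((\<Sum>k<m. cmod (a k)) * D)\<^sup>2 * exp (real CARD('n) * P\<^sup>2)"
  proof (rule feature_energy_perturb)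
    fix N and \<iota> :: "'n list" assume \<iota>: "\<iota> \<in> index_lists N"
    have "cmod ((\<Sum>k<m. a k * u k \<iota>) - (\<Sum>k<m. a k * w k \<iota>)) \<le> (\<Sum>k<m. cmod (a k) * (\<delta> * D * P ^ N))"
      unfolding sum_subtractf[symmetric] right_diff_distrib[symmetric]
      by (intro order_trans[OF norm_sum] sum_mono) (simp add: norm_mult mult_left_mono uw \<iota>)
    then show "cmod ((\<Sum>k<m. a k * u k \<iota>) - (\<Sum>k<m. a k * w k \<iota>)) \<le> \<delta> * ((\<Sum>k<m. cmod (a k)) * D) * P ^ N"
      by (simp add: sum_distrib_left sum_distrib_right mult_ac)
    have "cmod (\<Sum>k<m. a k * w k \<iota>) \<le> (\<Sum>k<m. cmod (a k) * (D * P ^ N))"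
      by (intro order_trans[OF norm_sum] sum_mono) (simp add: norm_mult mult_left_mono w \<iota>)
    then show "cmod (\<Sum>k<m. a k * w k \<iota>) \<le> (\<Sum>k<m. cmod (a k)) * D * P ^ N"
      by (simp add: sum_distrib_left sum_distrib_right mult_ac)
  qed (use assms in \<open>auto intro!: mult_nonneg_nonneg sum_nonneg\<close>)
  also have "\<dots> \<le> \<delta> * 3 * ((\<Sum>k<m. cmod (a k)) * D)\<^sup>2 * exp (real CARD('n) * P\<^sup>2)"
    using \<delta> by (intro mult_right_mono mult_left_mono) auto
  finally show ?thesis by (simp add: mult_ac)
qed

lemma entire_vec_line_holomorphic:
  fixes \<Phi> :: "complex^'n \<Rightarrow> complex^'m"
  assumes "entire_vec \<Phi>"
  shows "(\<lambda>s. \<Phi> (c + s *s v) $ j) holomorphic_on UNIV"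
proof -
  have "(\<lambda>s. \<Phi> (c + s *s v) $ j) field_differentiable (at s0)" for s0
  proof -
    obtain D where D: "(\<Phi> has_derivative D) (at (c + s0 *s v))" and lin: "\<And>(a::complex) w. D (a *s w) = a *s D w"
      using assms unfolding entire_vec_def by blast
    have "bounded_linear (\<lambda>h::complex. h *s v)"
      by (rule bounded_linearI') (auto simp: vec_eq_iff algebra_simps)
    then have "((\<lambda>h. h *s v) has_derivative (\<lambda>h. h *s v)) (at s0)"
      by (rule bounded_linear_imp_has_derivative)
    then have "((\<lambda>s. c + s *s v) has_derivative (\<lambda>h. h *s v)) (at s0)"
      by (intro derivative_eq_intros) auto
    from has_derivative_compose[OF this D]
    have "((\<lambda>s. \<Phi> (c + s *s v) $ j) has_derivative (\<lambda>h. D (h *s v) $ j)) (at s0)"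
      by (rule has_derivative_compose[OF _ bounded_linear_imp_has_derivative[OF bounded_linear_vec_nth],
            unfolded o_def])
    moreover have "(\<lambda>h. D (h *s v) $ j) = (*) (D v $ j)"
      by (rule ext) (simp add: lin mult.commute)
    ultimately show ?thesis
      unfolding field_differentiable_def has_field_derivative_def by auto
  qed
  then show ?thesis
    by (simp add: holomorphic_on_def field_differentiable_at_within)
qed

lemma entire_vec_id: "entire_vec (\<lambda>z. z)"
  unfolding entire_vec_def by (auto intro!: exI[of _ "\<lambda>z. z"] has_derivative_ident)

lemma gauss_feature_line_holomorphic:
  fixes \<Phi> :: "complex^'n \<Rightarrow> complex^'n"
  assumes "entire_vec \<Phi>"
  shows "(\<lambda>s. gauss_feature \<iota> (\<Phi> (c + s *s v))) holomorphic_on UNIV"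
proof -
  note line = entire_vec_line_holomorphic[OF assms]
  have "(\<lambda>s. prod_list (map (\<lambda>j. \<Phi> (c + s *s v) $ j) \<iota>)) holomorphic_on UNIV"
    by (induction \<iota>) (auto intro!: holomorphic_intros line)
  then show ?thesis
    unfolding gauss_feature_def
    by (intro holomorphic_intros holomorphic_on_compose[OF _ holomorphic_on_exp, unfolded o_def] line)
qed

lemma norm_gauss_feature_le:
  fixes z :: "complex^'n"
  assumes P: "\<And>j. cmod (z $ j) \<le> P" and \<iota>: "\<iota> \<in> index_lists N"
  shows "cmod (gauss_feature \<iota> z) \<le> exp (real CARD('n) * P\<^sup>2 / 2) * P ^ N"
proof -
  have "P \<ge> 0" using P by (auto intro: order_trans[OF norm_ge_zero])
  have "cmod (\<Sum>j\<in>UNIV. (z $ j)\<^sup>2) \<le> (\<Sum>j\<in>UNIV. (cmod (z $ j))\<^sup>2)"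
    by (rule order_trans[OF norm_sum]) (simp add: norm_power)
  then have "cmod (-(1/2) * (\<Sum>j\<in>UNIV. (z $ j)\<^sup>2)) \<le> (1/2) * (\<Sum>j\<in>UNIV. (cmod (z $ j))\<^sup>2)"
    by (simp add: norm_mult)
  also have "\<dots> \<le> (1/2) * (\<Sum>j\<in>(UNIV::'n set). P\<^sup>2)"
    by (intro mult_left_mono sum_mono power_mono P) auto
  finally have "cmod (exp (-(1/2) * (\<Sum>j\<in>UNIV. (z $ j)\<^sup>2))) \<le> exp (real CARD('n) * P\<^sup>2 / 2)"
    by (intro order_trans[OF norm_exp]) simp
  moreover have "cmod (prod_list (map (\<lambda>j. z $ j) \<iota>)) \<le> P ^ length \<iota>"
    using \<open>P \<ge> 0\<close> by (induction \<iota>) (auto simp: norm_mult intro!: mult_mono P)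
  ultimately show ?thesis
    using \<iota> unfolding gauss_feature_def norm_mult index_lists_def by (intro mult_mono) auto
qed

lemma gauss_feature_lines_bounded:
  fixes \<Phi> :: "complex^'n \<Rightarrow> complex^'n" and m :: nat
  assumes "entire_vec \<Phi>"
  obtains P where "P \<ge> 0" and "\<And>k s N \<iota>. k < m \<Longrightarrow> cmod s \<le> R \<Longrightarrow> \<iota> \<in> index_lists N \<Longrightarrow>
    cmod (gauss_feature \<iota> (\<Phi> (c k + s *s v k))) \<le> exp (real CARD('n) * P\<^sup>2 / 2) * P ^ N"
proof -
  have "compact (\<Union>k<m. \<Union>j. (\<lambda>s. \<Phi> (c k + s *s v k) $ j) ` cball 0 R)"
    by (intro compact_UN finite_lessThan finite_UNIV compact_continuous_image holomorphic_on_imp_continuous_on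
        holomorphic_on_subset[OF entire_vec_line_holomorphic[OF assms]] compact_cball) simp_all
  then obtain P where "P > 0" and P: "\<And>k s j. k < m \<Longrightarrow> cmod s \<le> R \<Longrightarrow> cmod (\<Phi> (c k + s *s v k) $ j) \<le> P"
    by (fastforce dest: compact_imp_bounded simp: bounded_pos)
  show thesis
    using \<open>P > 0\<close> by (intro that[of P] norm_gauss_feature_le P) auto
qed

text \<open>L is evaluation at i or one of its approximations taylor_approx q and diff_approx q h, applied to
  every feature along the complex line s |-> c k + s v k.\<close>

definition line_energy ::
  "(complex^('n::finite) \<Rightarrow> complex^'n) \<Rightarrow> (nat \<Rightarrow> complex) \<Rightarrow> (nat \<Rightarrow> complex^'n) \<Rightarrow> (nat \<Rightarrow> complex^'n)
     \<Rightarrow> nat \<Rightarrow> ((complex \<Rightarrow> complex) \<Rightarrow> complex) \<Rightarrow> real" where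
  "line_energy \<Phi> a c v m L
     = feature_energy (\<lambda>\<iota>. \<Sum>k<m. a k * L (\<lambda>s. gauss_feature \<iota> (\<Phi> (c k + s *s v k))))"

lemma line_energy_diff_approx_near_taylor_approx:
  fixes \<Phi> :: "complex^'n \<Rightarrow> complex^'n" and m :: nat
  assumes "entire_vec \<Phi>"
  obtains K where "\<And>h. 0 < h \<Longrightarrow> h \<le> 1 \<Longrightarrow>
    \<bar>line_energy \<Phi> a c v m (diff_approx q h) - line_energy \<Phi> a c v m (taylor_approx q)\<bar> \<le> h * K"
proof -
  define R where "R = 2 * real q + 2"
  obtain P where P0: "P \<ge> 0" and P: "\<And>k s N \<iota>. k < m \<Longrightarrow> cmod s \<le> R \<Longrightarrow> \<iota> \<in> index_lists N \<Longrightarrow>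
      cmod (gauss_feature \<iota> (\<Phi> (c k + s *s v k))) \<le> exp (real CARD('n) * P\<^sup>2 / 2) * P ^ N"
    using gauss_feature_lines_bounded[OF assms] by metis
  define A where "A = exp (real CARD('n) * P\<^sup>2 / 2)"
  define D where "D = A * 2 ^ (q + 1)"
  have "A > 0" "D \<ge> 0" by (simp_all add: A_def D_def)
  note hol = gauss_feature_line_holomorphic[OF assms]
  have "\<bar>line_energy \<Phi> a c v m (diff_approx q h) - line_energy \<Phi> a c v m (taylor_approx q)\<bar>
    \<le> h * (3 * ((\<Sum>k<m. cmod (a k)) * D)\<^sup>2 * exp (real CARD('n) * P\<^sup>2))" if h: "0 < h" "h \<le> 1" for h
    unfolding line_energy_def
  proof (rule feature_energy_combination_perturb[where
        u="\<lambda>k (\<iota>::'n list). diff_approx q h (\<lambda>s. gauss_feature \<iota> (\<Phi> (c k + s *s v k)))" and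
        w="\<lambda>k (\<iota>::'n list). taylor_approx q (\<lambda>s. gauss_feature \<iota> (\<Phi> (c k + s *s v k)))"])
    fix k N and \<iota> :: "'n list" assume "k < m" "\<iota> \<in> index_lists N"
    then have M: "\<And>s. cmod s \<le> R \<Longrightarrow> cmod (gauss_feature \<iota> (\<Phi> (c k + s *s v k))) \<le> A * P ^ N"
      unfolding A_def using P by blast
    have "cmod (diff_approx q h (\<lambda>s. gauss_feature \<iota> (\<Phi> (c k + s *s v k)))
        - taylor_approx q (\<lambda>s. gauss_feature \<iota> (\<Phi> (c k + s *s v k)))) \<le> h * (A * P ^ N) * 2 ^ (q + 1)"
      by (rule norm_diff_approx_minus_taylor_approx_le[OF hol h _ _ M]) (simp_all add: R_def)
    then show "cmod (diff_approx q h (\<lambda>s. gauss_feature \<iota> (\<Phi> (c k + s *s v k)))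
        - taylor_approx q (\<lambda>s. gauss_feature \<iota> (\<Phi> (c k + s *s v k)))) \<le> h * D * P ^ N"
      using h \<open>A > 0\<close> P0 by (simp add: D_def mult_ac)
    have "cmod (taylor_approx q (\<lambda>s. gauss_feature \<iota> (\<Phi> (c k + s *s v k)))) \<le> 2 * (A * P ^ N)"
      by (rule norm_taylor_approx_le[where R=R, OF hol _ M]) (simp add: R_def)
    also have "\<dots> \<le> D * P ^ N"
      using \<open>A > 0\<close> P0 mult_left_mono[OF one_le_power[of "2::real" q], of "2 * (A * P ^ N)"]
      by (simp add: D_def mult_ac)
    finally show "cmod (taylor_approx q (\<lambda>s. gauss_feature \<iota> (\<Phi> (c k + s *s v k)))) \<le> D * P ^ N" .
  qed (use h \<open>D \<ge> 0\<close> P0 in auto)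
  then show thesis by (rule that)
qed

lemma line_energy_taylor_approx_near_value:
  fixes \<Phi> :: "complex^'n \<Rightarrow> complex^'n" and m :: nat
  assumes "entire_vec \<Phi>"
  obtains K where "\<And>q. \<bar>line_energy \<Phi> a c v m (taylor_approx q) - line_energy \<Phi> a c v m (\<lambda>G. G \<i>)\<bar> \<le> K / 2 ^ q"
proof -
  obtain P where P0: "P \<ge> 0" and P: "\<And>k s N \<iota>. k < m \<Longrightarrow> cmod s \<le> 2 \<Longrightarrow> \<iota> \<in> index_lists N \<Longrightarrow>
      cmod (gauss_feature \<iota> (\<Phi> (c k + s *s v k))) \<le> exp (real CARD('n) * P\<^sup>2 / 2) * P ^ N"
    using gauss_feature_lines_bounded[OF assms] by metis
  define A where "A = exp (real CARD('n) * P\<^sup>2 / 2)"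
  have "A > 0" by (simp add: A_def)
  note hol = gauss_feature_line_holomorphic[OF assms]
  have "\<bar>line_energy \<Phi> a c v m (taylor_approx q) - line_energy \<Phi> a c v m (\<lambda>G. G \<i>)\<bar>
    \<le> 1 / 2 ^ q * (3 * ((\<Sum>k<m. cmod (a k)) * (2 * A))\<^sup>2 * exp (real CARD('n) * P\<^sup>2))" for q
    unfolding line_energy_def
  proof (rule feature_energy_combination_perturb[where
        u="\<lambda>k (\<iota>::'n list). taylor_approx q (\<lambda>s. gauss_feature \<iota> (\<Phi> (c k + s *s v k)))" and
        w="\<lambda>k (\<iota>::'n list). gauss_feature \<iota> (\<Phi> (c k + \<i> *s v k))"])
    fix k N and \<iota> :: "'n list" assume "k < m" "\<iota> \<in> index_lists N"
    then have M: "\<And>s. cmod s \<le> 2 \<Longrightarrow> cmod (gauss_feature \<iota> (\<Phi> (c k + s *s v k))) \<le> A * P ^ N"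
      unfolding A_def using P by blast
    have "cmod (taylor_approx q (\<lambda>s. gauss_feature \<iota> (\<Phi> (c k + s *s v k))) - gauss_feature \<iota> (\<Phi> (c k + \<i> *s v k)))
        \<le> 2 * (A * P ^ N) / 2 ^ q"
      by (rule norm_taylor_approx_minus_le[where R=2, OF hol _ M]) simp
    then show "cmod (taylor_approx q (\<lambda>s. gauss_feature \<iota> (\<Phi> (c k + s *s v k))) - gauss_feature \<iota> (\<Phi> (c k + \<i> *s v k)))
        \<le> 1 / 2 ^ q * (2 * A) * P ^ N"
      by (simp add: mult_ac)
    have "A * P ^ N \<le> 2 * A * P ^ N"
      using \<open>A > 0\<close> P0 by simp
    then show "cmod (gauss_feature \<iota> (\<Phi> (c k + \<i> *s v k))) \<le> 2 * A * P ^ N"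
      using M[of \<i>] by simp
  qed (use \<open>A > 0\<close> P0 in auto)
  then show thesis by (intro that) (simp add: mult_ac)
qed

lemma line_energy_value:
  fixes \<Phi> :: "complex^'n \<Rightarrow> complex^'n"
  shows "line_energy \<Phi> a c v m (\<lambda>G. G \<i>) = gram_form_C gauss_kernel_C a (\<lambda>k. \<Phi> (c k + \<i> *s v k)) m"
  by (simp add: line_energy_def gram_form_C_gauss_eq_feature_energy)

lemma line_energy_diff_approx_eq_gram_form_C:
  fixes \<Phi> :: "complex^'n \<Rightarrow> complex^'n" and m :: nat
  shows "line_energy \<Phi> a c v m (diff_approx q h)
    = gram_form_C gauss_kernel_C (\<lambda>i. diff_approx_weight q h (i div m) * a (i mod m))
        (\<lambda>i. \<Phi> (c (i mod m) + of_real (real (i div m) * h) *s v (i mod m))) (q * m)"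
  unfolding gram_form_C_gauss_eq_feature_energy line_energy_def
proof (intro arg_cong[where f=feature_energy] ext)
  fix \<iota>
  have "(\<Sum>k<m. a k * diff_approx q h (\<lambda>s. gauss_feature \<iota> (\<Phi> (c k + s *s v k))))
      = (\<Sum>b<q. \<Sum>k<m. diff_approx_weight q h b * a k
          * gauss_feature \<iota> (\<Phi> (c k + of_real (real b * h) *s v k)))"
    unfolding diff_approx_eq_samples sum_distrib_left by (subst sum.swap) (simp add: mult_ac)
  also have "\<dots> = (\<Sum>i<q * m. diff_approx_weight q h (i div m) * a (i mod m)
      * gauss_feature \<iota> (\<Phi> (c (i mod m) + of_real (real (i div m) * h) *s v (i mod m))))"
    by (rule sum_lessThan_mult_div_mod[symmetric])
  finally show "(\<Sum>k<m. a k * diff_approx q h (\<lambda>s. gauss_feature \<iota> (\<Phi> (c k + s *s v k))))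
      = (\<Sum>i<q * m. diff_approx_weight q h (i div m) * a (i mod m)
          * gauss_feature \<iota> (\<Phi> (c (i mod m) + of_real (real (i div m) * h) *s v (i mod m))))" .
qed

lemma le_of_dominated_approximations:
  fixes x y A :: real
  assumes f: "\<And>N. \<bar>f N - x\<bar> \<le> K / 2 ^ N" and g: "\<And>N. \<bar>g N - y\<bar> \<le> L / 2 ^ N"
    and fg: "\<And>N. f N \<le> A * g N" and "A \<ge> 0"
  shows "x \<le> A * y"
proof (rule LIMSEQ_le_const)
  have "(\<lambda>N. A * y + (K + A * L) * inverse (2 ^ N)) \<longlonglongrightarrow> A * y + (K + A * L) * 0"
    by (intro tendsto_intros LIMSEQ_inverse_realpow_zero) simp
  then show "(\<lambda>N. A * y + (K + A * L) * inverse (2 ^ N)) \<longlonglongrightarrow> A * y"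
    by simp
  have "x \<le> A * y + (K + A * L) * inverse (2 ^ N)" for N
  proof -
    have "x \<le> f N + K / 2 ^ N" using f[of N] by linarith
    also have "\<dots> \<le> A * g N + K / 2 ^ N" using fg by simp
    also have "A * g N \<le> A * (y + L / 2 ^ N)"
      using g[of N] \<open>A \<ge> 0\<close> by (intro mult_left_mono) auto
    finally show ?thesis by (simp add: field_simps)
  qed
  then show "\<exists>q. \<forall>N\<ge>q. x \<le> A * y + (K + A * L) * inverse (2 ^ N)" by blast
qed

lemma line_energy_le_of_diff_approx_le:
  fixes \<Phi> :: "complex^'n \<Rightarrow> complex^'n" and m :: nat
  assumes \<Phi>: "entire_vec \<Phi>" and "A \<ge> 0"
    and samples: "\<And>q h. line_energy \<Phi> a c v m (diff_approx q h) \<le> A * line_energy (\<lambda>z. z) a c v m (diff_approx q h)"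
  shows "line_energy \<Phi> a c v m (\<lambda>G. G \<i>) \<le> A * line_energy (\<lambda>z. z) a c v m (\<lambda>G. G \<i>)"
proof -
  have taylor: "line_energy \<Phi> a c v m (taylor_approx q) \<le> A * line_energy (\<lambda>z. z) a c v m (taylor_approx q)" for q
  proof -
    obtain K L where
      K: "\<And>h. 0 < h \<Longrightarrow> h \<le> 1 \<Longrightarrow>
        \<bar>line_energy \<Phi> a c v m (diff_approx q h) - line_energy \<Phi> a c v m (taylor_approx q)\<bar> \<le> h * K" and
      L: "\<And>h. 0 < h \<Longrightarrow> h \<le> 1 \<Longrightarrow>
        \<bar>line_energy (\<lambda>z. z) a c v m (diff_approx q h) - line_energy (\<lambda>z. z) a c v m (taylor_approx q)\<bar> \<le> h * L"
      using line_energy_diff_approx_near_taylor_approx[OF \<Phi>] line_energy_diff_approx_near_taylor_approx[OF entire_vec_id]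
      by metis
    show ?thesis
    proof (rule le_of_dominated_approximations)
      show "\<bar>line_energy \<Phi> a c v m (diff_approx q (1 / 2 ^ N)) - line_energy \<Phi> a c v m (taylor_approx q)\<bar>
          \<le> K / 2 ^ N" for N
        using K[of "1 / 2 ^ N"] by simp
      show "\<bar>line_energy (\<lambda>z. z) a c v m (diff_approx q (1 / 2 ^ N)) - line_energy (\<lambda>z. z) a c v m (taylor_approx q)\<bar>
          \<le> L / 2 ^ N" for N
        using L[of "1 / 2 ^ N"] by simp
    qed (use samples \<open>A \<ge> 0\<close> in auto)
  qed
  obtain K L where
    K: "\<And>q. \<bar>line_energy \<Phi> a c v m (taylor_approx q) - line_energy \<Phi> a c v m (\<lambda>G. G \<i>)\<bar> \<le> K / 2 ^ q" and
    L: "\<And>q. \<bar>line_energy (\<lambda>z. z) a c v m (taylor_approx q) - line_energy (\<lambda>z. z) a c v m (\<lambda>G. G \<i>)\<bar> \<le> L / 2 ^ q"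
    using line_energy_taylor_approx_near_value[OF \<Phi>] line_energy_taylor_approx_near_value[OF entire_vec_id]
    by metis
  show ?thesis
    by (rule le_of_dominated_approximations[OF K L taylor \<open>A \<ge> 0\<close>])
qed

lemma gram_form_C_gauss_le_of_real_points:
  fixes \<Phi> :: "complex^'n \<Rightarrow> complex^'n" and z :: "nat \<Rightarrow> complex^'n" and m :: nat
  assumes \<Phi>: "entire_vec \<Phi>" and "A \<ge> 0"
    and real: "\<And>c x M. gram_form_C gauss_kernel_C c (\<lambda>i. \<Phi> (cvec (x i))) M
      \<le> A * gram_form_C gauss_kernel_C c (\<lambda>i. cvec (x i)) M"
  shows "gram_form_C gauss_kernel_C a (\<lambda>k. \<Phi> (z k)) m \<le> A * gram_form_C gauss_kernel_C a z m"
proof -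
  define x where "x = (\<lambda>k. (\<chi> j. Re (z k $ j)) :: real^'n)"
  define y where "y = (\<lambda>k. (\<chi> j. Im (z k $ j)) :: real^'n)"
  have real_line: "cvec (x k) + of_real r *s cvec (y k) = cvec (x k + r *\<^sub>R y k)" for k r
    by (simp add: vec_eq_iff cvec_def)
  have imag_point: "cvec (x k) + \<i> *s cvec (y k) = z k" for k
    by (simp add: vec_eq_iff cvec_def x_def y_def complex_eq_iff)
  have "line_energy \<Phi> a (\<lambda>k. cvec (x k)) (\<lambda>k. cvec (y k)) m (\<lambda>G. G \<i>)
      \<le> A * line_energy (\<lambda>z. z) a (\<lambda>k. cvec (x k)) (\<lambda>k. cvec (y k)) m (\<lambda>G. G \<i>)"
    using \<Phi> \<open>A \<ge> 0\<close> by (rule line_energy_le_of_diff_approx_le)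
      (unfold line_energy_diff_approx_eq_gram_form_C real_line, rule real)
  then show ?thesis
    unfolding line_energy_value imag_point .
qed

theorem lemma3:
  fixes F :: "real^'n \<Rightarrow> real^'n" and Fc :: "complex^'n \<Rightarrow> complex^'n"
  assumes "real_analytic_vec F"
    and "entire_vec Fc"
    and "\<And>x. Fc (cvec x) = cvec (F x)"
    and "koopman_bounded_real gauss_kernel F"
  shows "koopman_bounded_complex gauss_kernel_C Fc"
proof -
  obtain B where "B \<ge> 0"
    and B: "\<And>b x m. gram_form gauss_kernel b (\<lambda>i. F (x i)) m \<le> B\<^sup>2 * gram_form gauss_kernel b x m"
    using koopman_bounded_real_gram_le[OF gauss_kernel_sym gram_form_gauss_nonneg assms(4)] by blast
  have real_points: "gram_form_C gauss_kernel_C c (\<lambda>i. Fc (cvec (x i))) m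
      \<le> B\<^sup>2 * gram_form_C gauss_kernel_C c (\<lambda>i. cvec (x i)) m" for c x m
    using B[of "\<lambda>i. Re (c i)" x m] B[of "\<lambda>i. Im (c i)" x m]
    by (simp add: assms(3) gram_form_C_gauss_cvec algebra_simps)
  have "gram_form_C gauss_kernel_C c (\<lambda>i. Fc (z i)) m \<le> (B + 1)\<^sup>2 * gram_form_C gauss_kernel_C c z m" for c z m
  proof -
    have "gram_form_C gauss_kernel_C c (\<lambda>i. Fc (z i)) m \<le> B\<^sup>2 * gram_form_C gauss_kernel_C c z m"
      by (rule gram_form_C_gauss_le_of_real_points[OF assms(2) _ real_points]) simp
    also have "\<dots> \<le> (B + 1)\<^sup>2 * gram_form_C gauss_kernel_C c z m"
      using \<open>B \<ge> 0\<close> by (intro mult_right_mono power_mono gram_form_C_gauss_nonneg) auto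
    finally show ?thesis .
  qed
  then show ?thesis
    by (rule koopman_bounded_complex_of_gram_le[rotated]) (use \<open>B \<ge> 0\<close> in simp)
qed

end
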